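(* Let $(E\to M,\rho,\langle\cdot,\cdot\rangle,\circ)$ be a Courant algebroid and let $\mathbf I,\mathbf J$ be vector bundle endomorphisms of $E$ over $\mathrm{id}_M$ such that $\mathbf I^2=\mathbf J^2=-1$, $\mathbf I\mathbf J=-\mathbf J\mathbf I$, both $\mathbf I$ and $\mathbf J$ are orthogonal for $\langle\cdot,\cdot\rangle$, and $N_{\mathbf I,\mathbf I}=N_{\mathbf J,\mathbf J}=N_{\mathbf I,\mathbf J}=0$. Then $(\mathbf I,\mathbf J,\mathbf I\mathbf J)$ is a hypercomplex structure on $E$.
   Context: A Courant algebroid $(E\to M,\rho,\langle\cdot,\cdot\rangle,\circ)$ consists of a real vector bundle $E\to M$ over a smooth manifold, a nondegenerate symmetric fiberwise bilinear pairing $\langle\cdot,\cdot\rangle$ on $E$, a vector bundle map $\rho:E\to TM$ (the anchor), and an $\mathbb R$-bilinear operation $\circ$ on $\Gamma(E)$ (the Dorfman bracket) such that for all $f\in C^\infty(M)$, $x,y,z\in\Gamma(E)$: $x\circ(y\circ z)=(x\circ y)\circ z+y\circ(x\circ z)$; $\rho(x\circ y)=[\rho(x),\rho(y)]$; $x\circ(fy)=(\rho(x)f)y+f(x\circ y)$; $x\circ y+y\circ x=2D\langle x,y\rangle$; $(Df)\circ x=0$; $\rho(x)\langle y,z\rangle=\langle x\circ y,z\rangle+\langle y,x\circ z\rangle$. Here $D:C^\infty(M)\to\Gamma(E)$ is the $\mathbb R$-linear map defined by $\langle Df,x\rangle=\tfrac12\rho(x)f$. For vector bundle endomorphisms $F,G$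 of $E$ (over $\mathrm{id}_M$), the Nijenhuis concomitant is the tensor $N_{F,G}:E\otimes E\to E$ given by $N_{F,G}(X,Y)=FX\circ GY-F(X\circ GY)-G(FX\circ Y)+FG(X\circ Y)+GX\circ FY-G(X\circ FY)-F(GX\circ Y)+GF(X\circ Y)$. An almost hypercomplex structure on $E$ is a triple $(\mathbf I,\mathbf J,\mathbf K)$ of vector bundle endomorphisms of $E$ over $\mathrm{id}_M$, each orthogonal for $\langle\cdot,\cdot\rangle$, with $\mathbf I^2=\mathbf J^2=\mathbf K^2=\mathbf I\mathbf J\mathbf K=-1$. It is a hypercomplex structure if $N_{\mathbf I,\mathbf I},N_{\mathbf J,\mathbf J},N_{\mathbf K,\mathbf K},N_{\mathbf I,\mathbf J},N_{\mathbf J,\mathbf K},N_{\mathbf K,\mathbf I}$ all vanish. *)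

theory Defs
  imports Complex_Main
begin

text \<open>Algebraic model of a Courant algebroid.  'f plays the role of the
real algebra C^infinity(M), 'e the role of the space of sections Gamma(E),
which is a module over 'f via sm.  Vector bundle endomorphisms over id_M are
exactly the C^infinity(M)-linear maps of sections, and tensors such as the
Nijenhuis concomitant vanish iff they vanish on all pairs of sections.\<close>

locale courant_algebroid =
  fixes sm :: "'f::{real_algebra_1,comm_ring_1} \<Rightarrow> 'e::real_vector \<Rightarrow> 'e"
    and pair :: "'e \<Rightarrow> 'e \<Rightarrow> 'f"
    and anchor :: "'e \<Rightarrow> 'f \<Rightarrow> 'f"
    and dorf :: "'e \<Rightarrow> 'e \<Rightarrow> 'e"
    and D :: "'f \<Rightarrow> 'e"
  assumes sm_add_left: "sm (f + g) x = sm f x + sm g x"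
    and sm_add_right: "sm f (x + y) = sm f x + sm f y"
    and sm_mult: "sm (f * g) x = sm f (sm g x)"
    and sm_one: "sm 1 x = x"
    and sm_of_real: "sm (of_real r) x = r *\<^sub>R x"
    and pair_sym: "pair x y = pair y x"
    and pair_add: "pair (x + y) z = pair x z + pair y z"
    and pair_sm: "pair (sm f x) y = f * pair x y"
    and pair_nondeg: "(\<forall>y. pair x y = 0) \<Longrightarrow> x = 0"
    and anchor_add: "anchor (x + y) = (\<lambda>g. anchor x g + anchor y g)"
    and anchor_sm: "anchor (sm f x) g = f * anchor x g"
    and anchor_deriv_add: "anchor x (g + h) = anchor x g + anchor x h"
    and anchor_deriv_scaleR: "anchor x (r *\<^sub>R g) = r *\<^sub>R anchor x g"
    and anchor_deriv_mult: "anchor x (g * h) = anchor x g * h + g * anchor x h"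
    and dorf_add_left: "dorf (x + y) z = dorf x z + dorf y z"
    and dorf_add_right: "dorf x (y + z) = dorf x y + dorf x z"
    and dorf_scaleR_left: "dorf (r *\<^sub>R x) y = r *\<^sub>R dorf x y"
    and dorf_scaleR_right: "dorf x (r *\<^sub>R y) = r *\<^sub>R dorf x y"
    and D_def: "pair (D f) x = (1/2) *\<^sub>R anchor x f"
    and jacobi: "dorf x (dorf y z) = dorf (dorf x y) z + dorf y (dorf x z)"
    and anchor_hom: "anchor (dorf x y) = (\<lambda>g. anchor x (anchor y g) - anchor y (anchor x g))"
    and leibniz: "dorf x (sm f y) = sm (anchor x f) y + sm f (dorf x y)"
    and dorf_sym: "dorf x y + dorf y x = 2 *\<^sub>R D (pair x y)"
    and D_dorf: "dorf (D f) x = 0"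
    and invariance: "anchor x (pair y z) = pair (dorf x y) z + pair y (dorf x z)"

definition bundle_endo :: "('f \<Rightarrow> 'e::plus \<Rightarrow> 'e) \<Rightarrow> ('e \<Rightarrow> 'e) \<Rightarrow> bool" where
  "bundle_endo sm F \<longleftrightarrow> (\<forall>x y. F (x + y) = F x + F y) \<and> (\<forall>f x. F (sm f x) = sm f (F x))"

definition orthogonal_endo :: "('e \<Rightarrow> 'e \<Rightarrow> 'f) \<Rightarrow> ('e \<Rightarrow> 'e) \<Rightarrow> bool" where
  "orthogonal_endo pair F \<longleftrightarrow> (\<forall>x y. pair (F x) (F y) = pair x y)"

definition nijenhuis_conc :: "('e \<Rightarrow> 'e \<Rightarrow> 'e::ab_group_add) \<Rightarrow> ('e \<Rightarrow> 'e) \<Rightarrow> ('e \<Rightarrow> 'e) \<Rightarrow> 'e \<Rightarrow> 'e \<Rightarrow> 'e" where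
  "nijenhuis_conc dorf F G X Y =
     dorf (F X) (G Y) - F (dorf X (G Y)) - G (dorf (F X) Y) + F (G (dorf X Y))
   + dorf (G X) (F Y) - G (dorf X (F Y)) - F (dorf (G X) Y) + G (F (dorf X Y))"

definition nij_vanishes :: "('e \<Rightarrow> 'e \<Rightarrow> 'e::ab_group_add) \<Rightarrow> ('e \<Rightarrow> 'e) \<Rightarrow> ('e \<Rightarrow> 'e) \<Rightarrow> bool" where
  "nij_vanishes dorf F G \<longleftrightarrow> (\<forall>X Y. nijenhuis_conc dorf F G X Y = 0)"

definition almost_hypercomplex ::
  "('f \<Rightarrow> 'e \<Rightarrow> 'e::ab_group_add) \<Rightarrow> ('e \<Rightarrow> 'e \<Rightarrow> 'f) \<Rightarrow> ('e \<Rightarrow> 'e) \<Rightarrow> ('e \<Rightarrow> 'e) \<Rightarrow> ('e \<Rightarrow> 'e) \<Rightarrow> bool" where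
  "almost_hypercomplex sm pair I J K \<longleftrightarrow>
     bundle_endo sm I \<and> bundle_endo sm J \<and> bundle_endo sm K \<and>
     orthogonal_endo pair I \<and> orthogonal_endo pair J \<and> orthogonal_endo pair K \<and>
     (\<forall>x. I (I x) = - x) \<and> (\<forall>x. J (J x) = - x) \<and> (\<forall>x. K (K x) = - x) \<and>
     (\<forall>x. I (J (K x)) = - x)"

definition hypercomplex ::
  "('f \<Rightarrow> 'e \<Rightarrow> 'e::ab_group_add) \<Rightarrow> ('e \<Rightarrow> 'e \<Rightarrow> 'f) \<Rightarrow> ('e \<Rightarrow> 'e \<Rightarrow> 'e) \<Rightarrow> ('e \<Rightarrow> 'e) \<Rightarrow> ('e \<Rightarrow> 'e) \<Rightarrow> ('e \<Rightarrow> 'e) \<Rightarrow> bool" where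
  "hypercomplex sm pair dorf I J K \<longleftrightarrow>
     almost_hypercomplex sm pair I J K \<and>
     nij_vanishes dorf I I \<and> nij_vanishes dorf J J \<and> nij_vanishes dorf K K \<and>
     nij_vanishes dorf I J \<and> nij_vanishes dorf J K \<and> nij_vanishes dorf K I"

end

theory Submission imports Defs begin

(* Put K = I J.  Expanding N_{F,G}(X,Y) with F, G in {I, J, K}, using
   bi-additivity of the Dorfman bracket and I^2 = J^2 = -1, I J = - J I, gives the
   purely algebraic identities
     2 N_{K,K}(X,Y) = N_{I,I}(X,Y) - J N_{I,I}(X,JY) - J N_{I,I}(JX,Y) + N_{I,I}(JX,JY)
                    + (the same with I and J interchanged),
   and similar ones for 4 N_{J,K} and 4 N_{K,I} (lemmas nijenhuis_KK, nijenhuis_JK,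
   nijenhuis_KI).  Their right-hand sides involve only N_{I,I} and N_{J,J}, so
   integrability of I and J alone forces the three concomitants involving K to vanish;
   the hypothesis N_{I,J} = 0 enters only because it is part of the definition of a
   hypercomplex structure.  No Courant axiom beyond bi-additivity of the bracket is
   used, so the identities live in the locale anticommuting_pair recording exactly
   these algebraic hypotheses. *)

lemma scaleR_4:
  fixes x :: "'a::real_vector"
  shows "(4::real) *\<^sub>R x = x + x + x + x"
proof -
  have "(4::real) *\<^sub>R x = 2 *\<^sub>R (2 *\<^sub>R x)" by simp
  then show ?thesis by (simp only: scaleR_2 add.assoc)
qed

locale anticommuting_pair =
  fixes dorf :: "'e::real_vector \<Rightarrow> 'e \<Rightarrow> 'e" and I J :: "'e \<Rightarrow> 'e"
  assumes dorf_add_left: "dorf (x + y) z = dorf x z + dorf y z"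
    and dorf_add_right: "dorf x (y + z) = dorf x y + dorf x z"
    and I_add: "I (x + y) = I x + I y"
    and J_add: "J (x + y) = J x + J y"
    and I_I: "I (I x) = - x"
    and J_J: "J (J x) = - x"
    and I_J_anticomm: "I (J x) = - J (I x)"
begin

sublocale I: additive I by unfold_locales (rule I_add)
sublocale J: additive J by unfold_locales (rule J_add)

lemma dorf_minus_left: "dorf (- x) y = - dorf x y"
  using additive.minus[OF additive.intro, of "\<lambda>x. dorf x y"] dorf_add_left by blast

lemma dorf_minus_right: "dorf x (- y) = - dorf x y"
  using additive.minus[OF additive.intro, of "dorf x"] dorf_add_right by blast

text \<open>Rewrite rules that push I, J and the bracket through sums and negations and
  reduce every word in I, J to the normal form (I or J applied at most once each,
  I outermost).  After rewriting, both sides of each identity below become the same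
  sum of bracket terms.\<close>

lemmas normalize =
  I_add J_add I.minus J.minus I_I J_J I_J_anticomm
  dorf_add_left dorf_add_right dorf_minus_left dorf_minus_right
  o_apply minus_add_distrib minus_minus

lemma nijenhuis_KK:
  "(2::real) *\<^sub>R nijenhuis_conc dorf (I \<circ> J) (I \<circ> J) X Y =
     nijenhuis_conc dorf I I X Y - J (nijenhuis_conc dorf I I X (J Y))
     - J (nijenhuis_conc dorf I I (J X) Y) + nijenhuis_conc dorf I I (J X) (J Y)
   + nijenhuis_conc dorf J J X Y - I (nijenhuis_conc dorf J J X (I Y))
     - I (nijenhuis_conc dorf J J (I X) Y) + nijenhuis_conc dorf J J (I X) (I Y)"
  unfolding nijenhuis_conc_def diff_conv_add_uminus scaleR_2
  by (simp only: normalize) (simp add: algebra_simps)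

lemma nijenhuis_JK:
  "(4::real) *\<^sub>R nijenhuis_conc dorf J (I \<circ> J) X Y =
     - I (nijenhuis_conc dorf I I X Y) + I (J (nijenhuis_conc dorf I I X (J Y)))
     + I (J (nijenhuis_conc dorf I I (J X) Y)) + I (nijenhuis_conc dorf I I (J X) (J Y))
   + I (nijenhuis_conc dorf J J X Y) - nijenhuis_conc dorf J J X (I Y)
     - nijenhuis_conc dorf J J (I X) Y - I (nijenhuis_conc dorf J J (I X) (I Y))"
  unfolding nijenhuis_conc_def diff_conv_add_uminus scaleR_4
  by (simp only: normalize) (simp add: algebra_simps)

lemma nijenhuis_KI:
  "(4::real) *\<^sub>R nijenhuis_conc dorf (I \<circ> J) I X Y =
     - J (nijenhuis_conc dorf I I X Y) + nijenhuis_conc dorf I I X (J Y)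
     + nijenhuis_conc dorf I I (J X) Y + J (nijenhuis_conc dorf I I (J X) (J Y))
   + J (nijenhuis_conc dorf J J X Y) + I (J (nijenhuis_conc dorf J J X (I Y)))
     + I (J (nijenhuis_conc dorf J J (I X) Y)) - J (nijenhuis_conc dorf J J (I X) (I Y))"
  unfolding nijenhuis_conc_def diff_conv_add_uminus scaleR_4
  by (simp only: normalize) (simp add: algebra_simps)

lemma nij_vanishes_K:
  assumes "nij_vanishes dorf I I" and "nij_vanishes dorf J J"
  shows "nij_vanishes dorf (I \<circ> J) (I \<circ> J)"
    and "nij_vanishes dorf J (I \<circ> J)"
    and "nij_vanishes dorf (I \<circ> J) I"
proof -
  have NI: "nijenhuis_conc dorf I I X Y = 0" for X Y
    using assms(1) unfolding nij_vanishes_def by blast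
  have NJ: "nijenhuis_conc dorf J J X Y = 0" for X Y
    using assms(2) unfolding nij_vanishes_def by blast
  show "nij_vanishes dorf (I \<circ> J) (I \<circ> J)"
    unfolding nij_vanishes_def using nijenhuis_KK by (simp add: NI NJ I.zero J.zero)
  show "nij_vanishes dorf J (I \<circ> J)"
    unfolding nij_vanishes_def using nijenhuis_JK by (simp add: NI NJ I.zero J.zero)
  show "nij_vanishes dorf (I \<circ> J) I"
    unfolding nij_vanishes_def using nijenhuis_KI by (simp add: NI NJ I.zero J.zero)
qed

end

lemma almost_hypercomplex_product:
  fixes I J :: "'e::ab_group_add \<Rightarrow> 'e"
  assumes I_endo: "bundle_endo sm I" and J_endo: "bundle_endo sm J"
    and I_I: "\<And>x. I (I x) = - x" and J_J: "\<And>x. J (J x) = - x"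
    and I_J_anticomm: "\<And>x. I (J x) = - J (I x)"
    and "orthogonal_endo pair I" and "orthogonal_endo pair J"
  shows "almost_hypercomplex sm pair I J (I \<circ> J)"
proof -
  interpret I: additive I
    using I_endo unfolding bundle_endo_def by unfold_locales blast
  have K_K: "(I \<circ> J) ((I \<circ> J) x) = - x" for x
    by (simp add: I_J_anticomm I.minus I_I J_J)
  have I_J_K: "I (J ((I \<circ> J) x)) = - x" for x
    by (simp add: I_J_anticomm I.minus I_I J_J)
  have "bundle_endo sm (I \<circ> J)"
    using I_endo J_endo unfolding bundle_endo_def by simp
  moreover have "orthogonal_endo pair (I \<circ> J)"
    using assms(6,7) unfolding orthogonal_endo_def by simp
  ultimately show ?thesis
    unfolding almost_hypercomplex_def using assms K_K I_J_K by blast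
qed

theorem mainTheorem10:
  fixes sm :: "'f::{real_algebra_1,comm_ring_1} \<Rightarrow> 'e::real_vector \<Rightarrow> 'e"
    and pair :: "'e \<Rightarrow> 'e \<Rightarrow> 'f"
    and anchor :: "'e \<Rightarrow> 'f \<Rightarrow> 'f"
    and dorf :: "'e \<Rightarrow> 'e \<Rightarrow> 'e"
    and D :: "'f \<Rightarrow> 'e"
    and I J :: "'e \<Rightarrow> 'e"
  assumes "courant_algebroid sm pair anchor dorf D"
    and "bundle_endo sm I" and "bundle_endo sm J"
    and "\<forall>x. I (I x) = - x" and "\<forall>x. J (J x) = - x"
    and "\<forall>x. I (J x) = - J (I x)"
    and "orthogonal_endo pair I" and "orthogonal_endo pair J"
    and "nij_vanishes dorf I I" and "nij_vanishes dorf J J" and "nij_vanishes dorf I J"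
  shows "hypercomplex sm pair dorf I J (I \<circ> J)"
proof -
  interpret courant_algebroid sm pair anchor dorf D by fact
  interpret anticommuting_pair dorf I J
    using assms(2-6) dorf_add_left dorf_add_right
    unfolding bundle_endo_def by unfold_locales blast+
  have "almost_hypercomplex sm pair I J (I \<circ> J)"
    using almost_hypercomplex_product assms(2-8) by blast
  then show ?thesis
    unfolding hypercomplex_def using nij_vanishes_K assms(9-11) by blast
qed

end
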